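(* Let $T>0$ and let $(S(s,t,\cdot))_{0\le s\le t\le T}$ be a family of maps from $\bar\Gamma$ into itself such that: (1) (translation invariance) $S(s,t,f+c)=S(s,t,f)+c$ for all $f\in\bar\Gamma$, $c\in\mathbb{R}$, $s\le t$; (2) (monotonicity) $f\le g$ implies $S(s,t,f)\le S(s,t,g)$ for all $s\le t$, $f,g\in\bar\Gamma$; (3) (locality) there is $\alpha>1$ such that for all $f,g\in\bar\Gamma$, $s\le t$, $x\in\mathbb{R}^2$, $R\ge0$: $\sup_{z\in\mathcal{B}(x,R)}|S(s,t,f)(z)-S(s,t,g)(z)|\le\sup_{z\in\mathcal{B}(x,R+\alpha(t-s))}|f(z)-g(z)|$, where $\mathcal{B}(x,r)$ is the closed ball of center $x$ and radius $r$ for the supremum norm on $\mathbb{R}^2$; (4) (semi-group) $S(r,t,f)=S(s,t,S(r,s,f))$ for all $r\le s\le t$ and $S(t,t,f)=f$, for all $f\in\bar\Gamma$; (5) (compatibility with linear solutions) for every $\rho\in\mathbb{R}\times[-1,0]$, with $f_\rho(x)=\rho\cdot x$, and all $s\le t$, $S(s,t,f_\rho)=f_\rho+v(\rho)(t-s)$. Then for any $f\in\bar\Gamma$, if $(x,t)\mapsto S(0,t,f)(x)$ is continuous on $\mathbb{R}^2\times[0,T]$, it is a viscosity solution of $\partial_t u=v(\nabla u)$, $u(\cdot,0)=f$, on $\mathbb{R}^2\times[0,T]$.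
   Context: $\bar\Gamma$ is the set of continuous $f:\mathbb{R}^2\to\mathbb{R}$ with $f(x,y_2)-f(x,y_1)\in[-(y_2-y_1),0]$ for all $x\in\mathbb{R}$ and $y_1\le y_2$. $v(\rho_1,\rho_2)=\frac1\pi\sqrt{\pi^2\rho_1^2+4\sin^2(\pi\rho_2)}$. A viscosity solution of $\partial_tu=v(\nabla u)$, $u(\cdot,0)=f$ on $\mathbb{R}^2\times[0,T]$ is a continuous $u$ with $u(\cdot,0)=f$ such that for every $\phi\in C^\infty(\mathbb{R}^2\times(0,T))$ and $(x_0,t_0)\in\mathbb{R}^2\times(0,T)$ with $\phi(x_0,t_0)=u(x_0,t_0)$: if $\phi\ge u$ on a neighbourhood of $(x_0,t_0)$ then $\partial_t\phi(x_0,t_0)\le v(\nabla\phi(x_0,t_0))$ (subsolution), and if $\phi\le u$ on a neighbourhood of $(x_0,t_0)$ then $\partial_t\phi(x_0,t_0)\ge v(\nabla\phi(x_0,t_0))$ (supersolution). *)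

theory Defs
  imports "HOL-Analysis.Analysis"
begin

definition Gamma_bar :: "((real \<times> real) \<Rightarrow> real) set" where
  "Gamma_bar = {f. continuous_on UNIV f \<and>
     (\<forall>x y1 y2. y1 \<le> y2 \<longrightarrow> f (x, y2) - f (x, y1) \<in> {-(y2 - y1)..0})}"

definition vel :: "real \<times> real \<Rightarrow> real" where
  "vel \<rho> = (1 / pi) * sqrt (pi\<^sup>2 * (fst \<rho>)\<^sup>2 + 4 * (sin (pi * snd \<rho>))\<^sup>2)"

definition sup_ball :: "real \<times> real \<Rightarrow> real \<Rightarrow> (real \<times> real) set" where
  "sup_ball x r = {z. max \<bar>fst z - fst x\<bar> \<bar>snd z - snd x\<bar> \<le> r}"

definition lin_fun :: "real \<times> real \<Rightarrow> (real \<times> real) \<Rightarrow> real" where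
  "lin_fun \<rho> x = fst \<rho> * fst x + snd \<rho> * snd x"

definition coord_dirs :: "((real \<times> real) \<times> real) set" where
  "coord_dirs = {((1, 0), 0), ((0, 1), 0), ((0, 0), 1)}"

definition partial_on ::
  "((real \<times> real) \<times> real) set \<Rightarrow> ((real \<times> real) \<times> real)
     \<Rightarrow> (((real \<times> real) \<times> real) \<Rightarrow> real) \<Rightarrow> (((real \<times> real) \<times> real) \<Rightarrow> real) \<Rightarrow> bool" where
  "partial_on S e g g' \<longleftrightarrow> (\<forall>p\<in>S. ((\<lambda>h. g (p + h *\<^sub>R e)) has_real_derivative g' p) (at 0))"

inductive_set iter_partials ::
  "((real \<times> real) \<times> real) set \<Rightarrow> (((real \<times> real) \<times> real) \<Rightarrow> real)
     \<Rightarrow> (((real \<times> real) \<times> real) \<Rightarrow> real) set"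
  for S f where
  base: "f \<in> iter_partials S f"
| step: "g \<in> iter_partials S f \<Longrightarrow> e \<in> coord_dirs \<Longrightarrow> partial_on S e g g'
           \<Longrightarrow> g' \<in> iter_partials S f"

definition smooth_on ::
  "((real \<times> real) \<times> real) set \<Rightarrow> (((real \<times> real) \<times> real) \<Rightarrow> real) \<Rightarrow> bool" where
  "smooth_on S f \<longleftrightarrow> (\<forall>g\<in>iter_partials S f. continuous_on S g \<and>
                        (\<forall>e\<in>coord_dirs. \<exists>g'. partial_on S e g g'))"

definition viscosity_solution ::
  "real \<Rightarrow> ((real \<times> real) \<Rightarrow> real) \<Rightarrow> ((real \<times> real) \<Rightarrow> real \<Rightarrow> real) \<Rightarrow> bool" where
  "viscosity_solution T f u \<longleftrightarrow>
     continuous_on (UNIV \<times> {0..T}) (\<lambda>(x, t). u x t) \<and>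
     (\<forall>x. u x 0 = f x) \<and>
     (\<forall>\<phi> x0 t0. smooth_on (UNIV \<times> {0<..<T}) \<phi> \<and> t0 \<in> {0<..<T} \<and> \<phi> (x0, t0) = u x0 t0 \<longrightarrow>
        (let dt = deriv (\<lambda>t. \<phi> (x0, t)) t0;
             grad = (deriv (\<lambda>a. \<phi> ((a, snd x0), t0)) (fst x0),
                     deriv (\<lambda>b. \<phi> ((fst x0, b), t0)) (snd x0))
         in ((\<exists>N. open N \<and> (x0, t0) \<in> N \<and>
                 (\<forall>x t. (x, t) \<in> N \<and> t \<in> {0<..<T} \<longrightarrow> u x t \<le> \<phi> (x, t)))
               \<longrightarrow> dt \<le> vel grad) \<and>
            ((\<exists>N. open N \<and> (x0, t0) \<in> N \<and>
                 (\<forall>x t. (x, t) \<in> N \<and> t \<in> {0<..<T} \<longrightarrow> \<phi> (x, t) \<le> u x t))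
               \<longrightarrow> dt \<ge> vel grad)))"

end

theory Submission
  imports Defs
begin

text \<open>
  Let \<open>u(x, t) = S 0 t f x\<close> and let a test function \<open>\<phi>\<close> touch \<open>u\<close> from above at \<open>(x0, t0)\<close>, with
  spatial gradient \<open>p\<close>. Since \<open>u(\<cdot>, t0)\<close> lies in \<open>Gamma_bar\<close>, touching forces \<open>snd p \<in> [-1, 0]\<close>, so the
  linear function with slope \<open>p\<close> is an admissible datum. For small \<open>h\<close>, on the ball of dependence
  \<open>sup_ball x0 (\<alpha> h)\<close> the datum \<open>u(\<cdot>, t0 - h)\<close> lies below \<open>\<phi>(\<cdot>, t0 - h)\<close>, hence below the affine function
  \<open>\<phi>(x0, t0 - h) + p \<cdot> (x - x0) + o(h)\<close>. Locality, monotonicity, translation invariance and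
  compatibility with linear solutions then give
  \<open>u(x0, t0) = S (t0 - h) t0 (u(\<cdot>, t0 - h)) x0 \<le> \<phi>(x0, t0 - h) + v(p) h + o(h)\<close>, i.e. \<open>\<partial>\<^sub>t\<phi> \<le> v(p)\<close>.
  The supersolution inequality is symmetric.
\<close>

section \<open>One-sided difference quotients\<close>

lemma DERIV_one_sided_quotients:
  fixes K :: "real \<Rightarrow> real"
  assumes "(K has_real_derivative L) (at x)"
  shows DERIV_right_quotient: "((\<lambda>h. (K (x + h) - K x) / h) \<longlongrightarrow> L) (at_right 0)"
    and DERIV_left_quotient: "((\<lambda>h. (K x - K (x - h)) / h) \<longlongrightarrow> L) (at_right 0)"
proof -
  have at0: "((\<lambda>h. (K (x + h) - K x) / h) \<longlongrightarrow> L) (at 0)"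
    using assms by (simp add: DERIV_def)
  then show "((\<lambda>h. (K (x + h) - K x) / h) \<longlongrightarrow> L) (at_right 0)"
    by (rule tendsto_mono[rotated]) (simp add: at_le)
  have "((\<lambda>h. (K (x + h) - K x) / h) \<longlongrightarrow> L) (at_left 0)"
    using at0 by (rule tendsto_mono[rotated]) (simp add: at_le)
  then have "((\<lambda>h. (K (x + - h) - K x) / - h) \<longlongrightarrow> L) (at_right 0)"
    unfolding filterlim_at_left_to_right by simp
  moreover have "(K (x + - h) - K x) / - h = (K x - K (x - h)) / h" for h
    by (simp add: minus_divide_left)
  ultimately show "((\<lambda>h. (K x - K (x - h)) / h) \<longlongrightarrow> L) (at_right 0)"
    by simp
qed

lemma DERIV_le_of_right_diff:
  fixes K :: "real \<Rightarrow> real"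
  assumes "(K has_real_derivative L) (at x)" "\<forall>\<^sub>F h in at_right 0. K (x + h) - K x \<le> c * h"
  shows "L \<le> c"
proof (rule tendsto_upperbound[OF DERIV_right_quotient[OF assms(1)]])
  show "\<forall>\<^sub>F h in at_right 0. (K (x + h) - K x) / h \<le> c"
    using assms(2) eventually_at_right_less by eventually_elim (simp add: divide_le_eq)
qed simp

lemma DERIV_ge_of_right_diff:
  fixes K :: "real \<Rightarrow> real"
  assumes "(K has_real_derivative L) (at x)" "\<forall>\<^sub>F h in at_right 0. c * h \<le> K (x + h) - K x"
  shows "c \<le> L"
proof (rule tendsto_lowerbound[OF DERIV_right_quotient[OF assms(1)]])
  show "\<forall>\<^sub>F h in at_right 0. c \<le> (K (x + h) - K x) / h"
    using assms(2) eventually_at_right_less by eventually_elim (simp add: le_divide_eq)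
qed simp

lemma DERIV_le_of_left_diff:
  fixes K :: "real \<Rightarrow> real"
  assumes "(K has_real_derivative L) (at x)" "\<forall>\<^sub>F h in at_right 0. K x - K (x - h) \<le> c * h"
  shows "L \<le> c"
proof (rule tendsto_upperbound[OF DERIV_left_quotient[OF assms(1)]])
  show "\<forall>\<^sub>F h in at_right 0. (K x - K (x - h)) / h \<le> c"
    using assms(2) eventually_at_right_less by eventually_elim (simp add: divide_le_eq)
qed simp

lemma DERIV_ge_of_left_diff:
  fixes K :: "real \<Rightarrow> real"
  assumes "(K has_real_derivative L) (at x)" "\<forall>\<^sub>F h in at_right 0. c * h \<le> K x - K (x - h)"
  shows "c \<le> L"
proof (rule tendsto_lowerbound[OF DERIV_left_quotient[OF assms(1)]])
  show "\<forall>\<^sub>F h in at_right 0. c \<le> (K x - K (x - h)) / h"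
    using assms(2) eventually_at_right_less by eventually_elim (simp add: le_divide_eq)
qed simp

lemma eventually_nhds_shifts:
  fixes x :: real
  assumes "\<forall>\<^sub>F y in nhds x. P y"
  shows "\<forall>\<^sub>F h in at_right 0. P (x + h) \<and> P (x - h)"
proof -
  have "filterlim (\<lambda>h. x + h) (nhds x) (at_right 0)" "filterlim (\<lambda>h. x - h) (nhds x) (at_right 0)"
    by (auto intro!: tendsto_eq_intros)
  then show ?thesis
    by (intro eventually_conj eventually_compose_filterlim[OF assms])
qed

lemma mvt_affine_bound:
  fixes F F' :: "real \<Rightarrow> real"
  assumes "\<And>z. z \<in> closed_segment a b \<Longrightarrow> (F has_real_derivative F' z) (at z)"
    and "\<And>z. z \<in> closed_segment a b \<Longrightarrow> \<bar>F' z - c\<bar> \<le> \<eta>"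
  shows "\<bar>F b - F a - c * (b - a)\<bar> \<le> \<eta> * \<bar>b - a\<bar>"
proof -
  have "((\<lambda>z. F z - c * z) has_real_derivative F' z - c) (at z within closed_segment a b)"
    if "z \<in> closed_segment a b" for z
    using DERIV_diff[OF assms(1)[OF that] DERIV_cmult_Id] by (rule has_field_derivative_at_within)
  then have "norm ((F b - c * b) - (F a - c * a)) \<le> \<eta> * norm (b - a)"
    using assms(2)
    by (intro field_differentiable_bound[OF convex_closed_segment _ _ ends_in_segment(2,1)]) auto
  then show ?thesis by (simp add: algebra_simps)
qed

lemma dist_Pair_le: "dist (x, s) (y, t) \<le> dist x y + dist s t"
  by (simp add: dist_Pair_Pair sqrt_sum_squares_le_sum)

lemma dist_Pair_mono:
  "dist x x' \<le> dist y y' \<Longrightarrow> dist s s' \<le> dist t t' \<Longrightarrow> dist (x, s) (x', s') \<le> dist (y, t) (y', t')"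
  by (simp add: dist_Pair_Pair add_mono power_mono)

lemma center_in_sup_ball: "0 \<le> r \<Longrightarrow> x \<in> sup_ball x r"
  by (simp add: sup_ball_def)

lemma dist_le_of_sup_ball: "x \<in> sup_ball x0 r \<Longrightarrow> dist x x0 \<le> 2 * r"
  using dist_Pair_le[of "fst x" "snd x" "fst x0" "snd x0"]
  by (simp add: sup_ball_def dist_real_def)

lemma eventually_nhds_time_slab:
  fixes x0 :: "real \<times> real" and T t0 :: real
  assumes "t0 \<in> {0<..<T}"
  shows "\<forall>\<^sub>F (x, t) in nhds (x0, t0). t \<in> {0<..<T}"
proof -
  have "open (UNIV \<times> {0<..<T} :: ((real \<times> real) \<times> real) set)"
    by (intro open_Times open_UNIV open_greaterThanLessThan)
  from eventually_nhds_in_open[OF this] show ?thesis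
    using assms by (simp add: case_prod_unfold mem_Times_iff)
qed

lemma eventually_nhds_slice:
  assumes "\<forall>\<^sub>F (x, t) in nhds (x0, t0). P x t"
  shows "\<forall>\<^sub>F b in nhds (snd x0). P (fst x0, b) t0"
proof -
  have "((\<lambda>b. ((fst x0, b), t0)) \<longlongrightarrow> ((fst x0, snd x0), t0)) (nhds (snd x0))"
    by (intro tendsto_intros filterlim_ident)
  then have "filterlim (\<lambda>b. ((fst x0, b), t0)) (nhds (x0, t0)) (nhds (snd x0))"
    by simp
  from eventually_compose_filterlim[OF assms this] show ?thesis by simp
qed

lemma eventually_backward_cone:
  assumes "\<forall>\<^sub>F y in nhds (x0, t0). P y"
  shows "\<forall>\<^sub>F h in at_right 0. \<forall>x\<in>sup_ball x0 (\<alpha> * h). P (x, t0 - h)"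
proof -
  obtain d where "d > 0" and d: "\<And>y. dist y (x0, t0) < d \<Longrightarrow> P y"
    using assms unfolding eventually_nhds_metric by blast
  have "\<forall>\<^sub>F h in at_right 0. h \<in> {0<..<d / (2 * \<bar>\<alpha>\<bar> + 1)}"
    using \<open>d > 0\<close> by (intro eventually_at_right_real) simp
  then show ?thesis
  proof eventually_elim
    case (elim h)
    show ?case
    proof
      fix x assume "x \<in> sup_ball x0 (\<alpha> * h)"
      moreover have "\<alpha> * h \<le> \<bar>\<alpha>\<bar> * h"
        using elim by (intro mult_right_mono) auto
      ultimately have "dist x x0 \<le> 2 * \<bar>\<alpha>\<bar> * h"
        using dist_le_of_sup_ball[of x x0 "\<alpha> * h"] by linarith
      then have "dist (x, t0 - h) (x0, t0) \<le> (2 * \<bar>\<alpha>\<bar> + 1) * h"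
        using dist_Pair_le[of x "t0 - h" x0 t0] elim by (simp add: dist_real_def algebra_simps)
      also have "\<dots> < d"
        using elim by (simp add: pos_less_divide_eq mult.commute)
      finally show "P (x, t0 - h)" by (rule d)
    qed
  qed
qed

lemma scaled_dist_le_of_sup_ball:
  assumes "x \<in> sup_ball x0 (\<alpha> * h)" "\<alpha> > 0" "\<epsilon> \<ge> 0"
  shows "\<epsilon> / (2 * \<alpha>) * dist x x0 \<le> \<epsilon> * h"
proof -
  have "\<epsilon> / (2 * \<alpha>) * dist x x0 \<le> \<epsilon> / (2 * \<alpha>) * (2 * (\<alpha> * h))"
    using dist_le_of_sup_ball[OF assms(1)] assms(2,3) by (intro mult_left_mono) auto
  also have "\<dots> = \<epsilon> * h"
    using assms(2) by simp
  finally show ?thesis .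
qed

lemma Gamma_barI:
  assumes "continuous_on UNIV g" "\<And>x y1 y2. y1 \<le> y2 \<Longrightarrow> g (x, y2) - g (x, y1) \<in> {-(y2 - y1)..0}"
  shows "g \<in> Gamma_bar"
  unfolding Gamma_bar_def using assms by blast

lemma Gamma_barD:
  assumes "g \<in> Gamma_bar"
  shows "continuous_on UNIV g" "\<And>x y1 y2. y1 \<le> y2 \<Longrightarrow> g (x, y2) - g (x, y1) \<in> {-(y2 - y1)..0}"
  using assms unfolding Gamma_bar_def by blast+

lemma lin_fun_diff: "lin_fun \<rho> (x - y) = lin_fun \<rho> x - lin_fun \<rho> y"
  by (simp add: lin_fun_def algebra_simps)

lemma lin_fun_plus_const_in_Gamma_bar:
  assumes "snd \<rho> \<in> {-1..0}"
  shows "(\<lambda>x. lin_fun \<rho> x + C) \<in> Gamma_bar"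
proof (rule Gamma_barI)
  show "continuous_on UNIV (\<lambda>x. lin_fun \<rho> x + C)"
    unfolding lin_fun_def by (intro continuous_intros)
  fix x and y1 y2 :: real assume "y1 \<le> y2"
  then have "snd \<rho> * (y2 - y1) \<le> 0" "0 \<le> (snd \<rho> + 1) * (y2 - y1)"
    using assms by (auto intro: mult_nonpos_nonneg)
  then have "snd \<rho> * (y2 - y1) \<in> {-(y2 - y1)..0}"
    by (simp add: algebra_simps)
  then show "lin_fun \<rho> (x, y2) + C - (lin_fun \<rho> (x, y1) + C) \<in> {-(y2 - y1)..0}"
    by (simp add: lin_fun_def algebra_simps)
qed

lemma min_in_Gamma_bar:
  assumes "g \<in> Gamma_bar" "h \<in> Gamma_bar"
  shows "(\<lambda>x. min (g x) (h x)) \<in> Gamma_bar"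
proof (rule Gamma_barI)
  show "continuous_on UNIV (\<lambda>x. min (g x) (h x))"
    using Gamma_barD(1) assms by (intro continuous_on_min)
  fix x and y1 y2 :: real assume "y1 \<le> y2"
  then show "min (g (x, y2)) (h (x, y2)) - min (g (x, y1)) (h (x, y1)) \<in> {-(y2 - y1)..0}"
    using Gamma_barD(2)[OF assms(1), of y1 y2 x] Gamma_barD(2)[OF assms(2), of y1 y2 x]
    by (auto simp: min_def)
qed

lemma max_in_Gamma_bar:
  assumes "g \<in> Gamma_bar" "h \<in> Gamma_bar"
  shows "(\<lambda>x. max (g x) (h x)) \<in> Gamma_bar"
proof (rule Gamma_barI)
  show "continuous_on UNIV (\<lambda>x. max (g x) (h x))"
    using Gamma_barD(1) assms by (intro continuous_on_max)
  fix x and y1 y2 :: real assume "y1 \<le> y2"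
  then show "max (g (x, y2)) (h (x, y2)) - max (g (x, y1)) (h (x, y1)) \<in> {-(y2 - y1)..0}"
    using Gamma_barD(2)[OF assms(1), of y1 y2 x] Gamma_barD(2)[OF assms(2), of y1 y2 x]
    by (auto simp: max_def)
qed

lemma Gamma_bar_touching_above_slope:
  assumes u: "u \<in> Gamma_bar" and K: "(K has_real_derivative L) (at b0)"
    and touch: "K b0 = u (a, b0)" and above: "\<forall>\<^sub>F b in nhds b0. u (a, b) \<le> K b"
  shows "L \<in> {-1..0}"
proof -
  have slope: "-(y2 - y1) \<le> u (a, y2) - u (a, y1)" "u (a, y2) - u (a, y1) \<le> 0" if "y1 \<le> y2" for y1 y2
    using Gamma_barD(2)[OF u that, of a] by auto
  have near: "\<forall>\<^sub>F h in at_right 0. 0 < h \<and> u (a, b0 + h) \<le> K (b0 + h) \<and> u (a, b0 - h) \<le> K (b0 - h)"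
    using eventually_at_right_less eventually_nhds_shifts[OF above] by (rule eventually_conj)
  have "-1 \<le> L"
    using K
  proof (rule DERIV_ge_of_right_diff)
    show "\<forall>\<^sub>F h in at_right 0. -1 * h \<le> K (b0 + h) - K b0"
      using near
    proof eventually_elim
      case (elim h)
      then show ?case using slope(1)[of b0 "b0 + h"] touch by simp
    qed
  qed
  moreover have "L \<le> 0"
    using K
  proof (rule DERIV_le_of_left_diff)
    show "\<forall>\<^sub>F h in at_right 0. K b0 - K (b0 - h) \<le> 0 * h"
      using near
    proof eventually_elim
      case (elim h)
      then show ?case using slope(2)[of "b0 - h" b0] touch by simp
    qed
  qed
  ultimately show ?thesis by simp
qed

lemma Gamma_bar_touching_below_slope:
  assumes u: "u \<in> Gamma_bar" and K: "(K has_real_derivative L) (at b0)"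
    and touch: "K b0 = u (a, b0)" and below: "\<forall>\<^sub>F b in nhds b0. K b \<le> u (a, b)"
  shows "L \<in> {-1..0}"
proof -
  have slope: "-(y2 - y1) \<le> u (a, y2) - u (a, y1)" "u (a, y2) - u (a, y1) \<le> 0" if "y1 \<le> y2" for y1 y2
    using Gamma_barD(2)[OF u that, of a] by auto
  have near: "\<forall>\<^sub>F h in at_right 0. 0 < h \<and> K (b0 + h) \<le> u (a, b0 + h) \<and> K (b0 - h) \<le> u (a, b0 - h)"
    using eventually_at_right_less eventually_nhds_shifts[OF below] by (rule eventually_conj)
  have "-1 \<le> L"
    using K
  proof (rule DERIV_ge_of_left_diff)
    show "\<forall>\<^sub>F h in at_right 0. -1 * h \<le> K b0 - K (b0 - h)"
      using near
    proof eventually_elim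
      case (elim h)
      then show ?case using slope(1)[of "b0 - h" b0] touch by simp
    qed
  qed
  moreover have "L \<le> 0"
    using K
  proof (rule DERIV_le_of_right_diff)
    show "\<forall>\<^sub>F h in at_right 0. K (b0 + h) - K b0 \<le> 0 * h"
      using near
    proof eventually_elim
      case (elim h)
      then show ?case using slope(2)[of b0 "b0 + h"] touch by simp
    qed
  qed
  ultimately show ?thesis by simp
qed

section \<open>First-order behaviour of smooth test functions\<close>

lemma partial_on_has_real_derivative:
  assumes "partial_on \<Omega> e \<phi> \<phi>'" "p \<in> \<Omega>"
  shows "((\<lambda>s. \<phi> (p + (s - c) *\<^sub>R e)) has_real_derivative \<phi>' p) (at c)"
  using assms DERIV_shift[of "\<lambda>s. \<phi> (p + (s - c) *\<^sub>R e)" "\<phi>' p" 0 c]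
  unfolding partial_on_def by simp

lemma partial_on_coordinate_derivatives:
  assumes "((a, b), t) \<in> \<Omega>"
  shows "partial_on \<Omega> ((1, 0), 0) \<phi> \<phi>' \<Longrightarrow>
           ((\<lambda>s. \<phi> ((s, b), t)) has_real_derivative \<phi>' ((a, b), t)) (at a)"
    and "partial_on \<Omega> ((0, 1), 0) \<phi> \<phi>' \<Longrightarrow>
           ((\<lambda>s. \<phi> ((a, s), t)) has_real_derivative \<phi>' ((a, b), t)) (at b)"
    and "partial_on \<Omega> ((0, 0), 1) \<phi> \<phi>' \<Longrightarrow>
           ((\<lambda>s. \<phi> ((a, b), s)) has_real_derivative \<phi>' ((a, b), t)) (at t)"
proof -
  show "((\<lambda>s. \<phi> ((s, b), t)) has_real_derivative \<phi>' ((a, b), t)) (at a)"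
    if "partial_on \<Omega> ((1, 0), 0) \<phi> \<phi>'"
    using partial_on_has_real_derivative[OF that assms, of a] by simp
  show "((\<lambda>s. \<phi> ((a, s), t)) has_real_derivative \<phi>' ((a, b), t)) (at b)"
    if "partial_on \<Omega> ((0, 1), 0) \<phi> \<phi>'"
    using partial_on_has_real_derivative[OF that assms, of b] by simp
  show "((\<lambda>s. \<phi> ((a, b), s)) has_real_derivative \<phi>' ((a, b), t)) (at t)"
    if "partial_on \<Omega> ((0, 0), 1) \<phi> \<phi>'"
    using partial_on_has_real_derivative[OF that assms, of t] by simp
qed

lemma smooth_on_partial:
  assumes "smooth_on \<Omega> \<phi>" "e \<in> coord_dirs"
  obtains \<phi>' where "partial_on \<Omega> e \<phi> \<phi>'" "continuous_on \<Omega> \<phi>'"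
proof -
  have smooth: "continuous_on \<Omega> g \<and> (\<forall>e\<in>coord_dirs. \<exists>g'. partial_on \<Omega> e g g')"
    if "g \<in> iter_partials \<Omega> \<phi>" for g
    using assms(1) that unfolding smooth_on_def by blast
  obtain \<phi>' where \<phi>': "partial_on \<Omega> e \<phi> \<phi>'"
    using smooth[OF iter_partials.base] assms(2) by blast
  moreover have "continuous_on \<Omega> \<phi>'"
    using smooth[OF iter_partials.step[OF iter_partials.base assms(2) \<phi>']] by blast
  ultimately show thesis by (rule that)
qed

text \<open>Mean value theorem along the two coordinate segments \<open>x0 \<rightarrow> (a, b0) \<rightarrow> (a, b)\<close>.\<close>

lemma spatial_expansion_on_ball:
  fixes \<phi> :: "((real \<times> real) \<times> real) \<Rightarrow> real"
  assumes d1: "partial_on \<Omega> ((1, 0), 0) \<phi> \<phi>1" and d2: "partial_on \<Omega> ((0, 1), 0) \<phi> \<phi>2"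
    and near: "\<And>y. dist y (x0, t0) < r \<Longrightarrow> y \<in> \<Omega> \<and> \<bar>\<phi>1 y - c1\<bar> \<le> \<eta> \<and> \<bar>\<phi>2 y - c2\<bar> \<le> \<eta>"
    and xt: "dist (x, t) (x0, t0) < r"
  shows "\<bar>\<phi> (x, t) - \<phi> (x0, t) - lin_fun (c1, c2) (x - x0)\<bar> \<le> 2 * \<eta> * dist x x0"
proof -
  obtain a0 b0 a b where x0: "x0 = (a0, b0)" and x: "x = (a, b)" by fastforce
  have seg1: "\<bar>\<phi> ((a, b0), t) - \<phi> ((a0, b0), t) - c1 * (a - a0)\<bar> \<le> \<eta> * \<bar>a - a0\<bar>"
  proof (rule mvt_affine_bound)
    fix z assume "z \<in> closed_segment a0 a"
    from dist_in_closed_segment[OF this] have "dist ((z, b0), t) (x0, t0) \<le> dist (x, t) (x0, t0)"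
      unfolding x0 x by (intro dist_Pair_mono) (auto simp: dist_commute)
    then have z: "dist ((z, b0), t) (x0, t0) < r" using xt by linarith
    show "((\<lambda>s. \<phi> ((s, b0), t)) has_real_derivative \<phi>1 ((z, b0), t)) (at z)"
      using near[OF z] by (intro partial_on_coordinate_derivatives(1)[OF _ d1]) simp
    show "\<bar>\<phi>1 ((z, b0), t) - c1\<bar> \<le> \<eta>" using near[OF z] by simp
  qed
  have seg2: "\<bar>\<phi> ((a, b), t) - \<phi> ((a, b0), t) - c2 * (b - b0)\<bar> \<le> \<eta> * \<bar>b - b0\<bar>"
  proof (rule mvt_affine_bound)
    fix z assume "z \<in> closed_segment b0 b"
    from dist_in_closed_segment[OF this] have "dist ((a, z), t) (x0, t0) \<le> dist (x, t) (x0, t0)"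
      unfolding x0 x by (intro dist_Pair_mono) (auto simp: dist_commute)
    then have z: "dist ((a, z), t) (x0, t0) < r" using xt by linarith
    show "((\<lambda>s. \<phi> ((a, s), t)) has_real_derivative \<phi>2 ((a, z), t)) (at z)"
      using near[OF z] by (intro partial_on_coordinate_derivatives(2)[OF _ d2]) simp
    show "\<bar>\<phi>2 ((a, z), t) - c2\<bar> \<le> \<eta>" using near[OF z] by simp
  qed
  have "\<eta> \<ge> 0"
    using near[OF xt] by linarith
  moreover have "\<bar>a - a0\<bar> \<le> dist x x0" "\<bar>b - b0\<bar> \<le> dist x x0"
    using dist_fst_le[of x x0] dist_snd_le[of x x0] by (simp_all add: x0 x dist_real_def)
  ultimately have bound: "\<eta> * \<bar>b - b0\<bar> + \<eta> * \<bar>a - a0\<bar> \<le> \<eta> * dist x x0 + \<eta> * dist x x0"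
    by (intro add_mono mult_left_mono) auto
  have "\<bar>\<phi> (x, t) - \<phi> (x0, t) - lin_fun (c1, c2) (x - x0)\<bar>
      = \<bar>(\<phi> ((a, b), t) - \<phi> ((a, b0), t) - c2 * (b - b0))
         + (\<phi> ((a, b0), t) - \<phi> ((a0, b0), t) - c1 * (a - a0))\<bar>"
    by (simp add: x0 x lin_fun_def algebra_simps)
  also have "\<dots> \<le> \<eta> * \<bar>b - b0\<bar> + \<eta> * \<bar>a - a0\<bar>"
    using seg1 seg2 abs_triangle_ineq by (smt (verit))
  finally show ?thesis using bound by linarith
qed

lemma partials_spatial_expansion:
  fixes \<phi> :: "((real \<times> real) \<times> real) \<Rightarrow> real"
  assumes \<Omega>: "open \<Omega>" "(x0, t0) \<in> \<Omega>"
    and d1: "partial_on \<Omega> ((1, 0), 0) \<phi> \<phi>1" and c1: "continuous_on \<Omega> \<phi>1"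
    and d2: "partial_on \<Omega> ((0, 1), 0) \<phi> \<phi>2" and c2: "continuous_on \<Omega> \<phi>2"
    and "\<epsilon> > 0"
  shows "\<forall>\<^sub>F (x, t) in nhds (x0, t0).
           \<bar>\<phi> (x, t) - \<phi> (x0, t) - lin_fun (\<phi>1 (x0, t0), \<phi>2 (x0, t0)) (x - x0)\<bar> \<le> \<epsilon> * dist x x0"
proof -
  define q where "q = (x0, t0)"
  have "(\<phi>1 \<longlongrightarrow> \<phi>1 q) (nhds q)" "(\<phi>2 \<longlongrightarrow> \<phi>2 q) (nhds q)"
    using c1 c2 \<Omega> by (simp_all add: q_def tendsto_nhds_iff continuous_on_eq_continuous_at continuous_at)
  then have "\<forall>\<^sub>F y in nhds q. y \<in> \<Omega> \<and> dist (\<phi>1 y) (\<phi>1 q) < \<epsilon> / 2 \<and> dist (\<phi>2 y) (\<phi>2 q) < \<epsilon> / 2"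
    using \<Omega> \<open>\<epsilon> > 0\<close> by (intro eventually_conj eventually_nhds_in_open tendstoD) (auto simp: q_def)
  then obtain r where "r > 0"
    and near: "\<And>y. dist y q < r \<Longrightarrow> y \<in> \<Omega> \<and> \<bar>\<phi>1 y - \<phi>1 q\<bar> \<le> \<epsilon> / 2 \<and> \<bar>\<phi>2 y - \<phi>2 q\<bar> \<le> \<epsilon> / 2"
    unfolding eventually_nhds_metric dist_real_def by fastforce
  have "\<bar>\<phi> (x, t) - \<phi> (x0, t) - lin_fun (\<phi>1 q, \<phi>2 q) (x - x0)\<bar> \<le> \<epsilon> * dist x x0"
    if "dist (x, t) q < r" for x t
    using spatial_expansion_on_ball[OF d1 d2 near[unfolded q_def] that[unfolded q_def]]
    by (simp add: q_def)
  then show ?thesis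
    unfolding eventually_nhds_metric using \<open>r > 0\<close> by (auto simp: q_def)
qed

definition spatial_grad ::
  "(((real \<times> real) \<times> real) \<Rightarrow> real) \<Rightarrow> real \<times> real \<Rightarrow> real \<Rightarrow> real \<times> real" where
  "spatial_grad \<phi> x t = (deriv (\<lambda>a. \<phi> ((a, snd x), t)) (fst x), deriv (\<lambda>b. \<phi> ((fst x, b), t)) (snd x))"

lemma smooth_on_first_order:
  assumes "smooth_on \<Omega> \<phi>" "open \<Omega>" "(x0, t0) \<in> \<Omega>"
  shows "((\<lambda>t. \<phi> (x0, t)) has_real_derivative deriv (\<lambda>t. \<phi> (x0, t)) t0) (at t0)"
    and "((\<lambda>b. \<phi> ((fst x0, b), t0)) has_real_derivative snd (spatial_grad \<phi> x0 t0)) (at (snd x0))"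
    and "\<epsilon> > 0 \<Longrightarrow> \<forall>\<^sub>F (x, t) in nhds (x0, t0).
           \<bar>\<phi> (x, t) - \<phi> (x0, t) - lin_fun (spatial_grad \<phi> x0 t0) (x - x0)\<bar> \<le> \<epsilon> * dist x x0"
proof -
  obtain a0 b0 where x0: "x0 = (a0, b0)" by fastforce
  obtain \<phi>1 where d1: "partial_on \<Omega> ((1, 0), 0) \<phi> \<phi>1" and c1: "continuous_on \<Omega> \<phi>1"
    using smooth_on_partial[OF assms(1), of "((1, 0), 0)"] by (auto simp: coord_dirs_def)
  obtain \<phi>2 where d2: "partial_on \<Omega> ((0, 1), 0) \<phi> \<phi>2" and c2: "continuous_on \<Omega> \<phi>2"
    using smooth_on_partial[OF assms(1), of "((0, 1), 0)"] by (auto simp: coord_dirs_def)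
  obtain \<phi>t where dt: "partial_on \<Omega> ((0, 0), 1) \<phi> \<phi>t"
    using smooth_on_partial[OF assms(1), of "((0, 0), 1)"] by (auto simp: coord_dirs_def)
  note derivs = partial_on_coordinate_derivatives[OF assms(3)[unfolded x0]]
  have grad: "spatial_grad \<phi> x0 t0 = (\<phi>1 (x0, t0), \<phi>2 (x0, t0))"
    using DERIV_imp_deriv[OF derivs(1)[OF d1]] DERIV_imp_deriv[OF derivs(2)[OF d2]]
    by (simp add: spatial_grad_def x0)
  show "((\<lambda>t. \<phi> (x0, t)) has_real_derivative deriv (\<lambda>t. \<phi> (x0, t)) t0) (at t0)"
    using DERIV_imp_deriv[OF derivs(3)[OF dt]] derivs(3)[OF dt] by (simp add: x0)
  show "((\<lambda>b. \<phi> ((fst x0, b), t0)) has_real_derivative snd (spatial_grad \<phi> x0 t0)) (at (snd x0))"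
    using derivs(2)[OF d2] unfolding grad by (simp add: x0)
  show "\<forall>\<^sub>F (x, t) in nhds (x0, t0).
          \<bar>\<phi> (x, t) - \<phi> (x0, t) - lin_fun (spatial_grad \<phi> x0 t0) (x - x0)\<bar> \<le> \<epsilon> * dist x x0"
    if "\<epsilon> > 0"
    unfolding grad using assms(2,3) d1 c1 d2 c2 that by (rule partials_spatial_expansion)
qed

section \<open>Comparison with linear solutions\<close>

locale monotone_semigroup =
  fixes T :: real
    and S :: "real \<Rightarrow> real \<Rightarrow> ((real \<times> real) \<Rightarrow> real) \<Rightarrow> ((real \<times> real) \<Rightarrow> real)"
    and \<alpha> :: real
  assumes alpha_pos: "\<alpha> > 0"
    and maps_into: "\<And>s t g. 0 \<le> s \<Longrightarrow> s \<le> t \<Longrightarrow> t \<le> T \<Longrightarrow> g \<in> Gamma_bar \<Longrightarrow> S s t g \<in> Gamma_bar"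
    and transl: "\<And>s t g c. 0 \<le> s \<Longrightarrow> s \<le> t \<Longrightarrow> t \<le> T \<Longrightarrow> g \<in> Gamma_bar
                   \<Longrightarrow> S s t (\<lambda>x. g x + c) = (\<lambda>x. S s t g x + c)"
    and mono: "\<And>s t g h. 0 \<le> s \<Longrightarrow> s \<le> t \<Longrightarrow> t \<le> T \<Longrightarrow> g \<in> Gamma_bar \<Longrightarrow> h \<in> Gamma_bar
                 \<Longrightarrow> (\<forall>x. g x \<le> h x) \<Longrightarrow> (\<forall>x. S s t g x \<le> S s t h x)"
    and locality: "\<And>g h s t x R. g \<in> Gamma_bar \<Longrightarrow> h \<in> Gamma_bar \<Longrightarrow> 0 \<le> s \<Longrightarrow> s \<le> t \<Longrightarrow> t \<le> T
                     \<Longrightarrow> R \<ge> 0 \<Longrightarrow> (SUP z\<in>sup_ball x R. ereal \<bar>S s t g z - S s t h z\<bar>)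
                       \<le> (SUP z\<in>sup_ball x (R + \<alpha> * (t - s)). ereal \<bar>g z - h z\<bar>)"
    and semigroup: "\<And>r s t g. 0 \<le> r \<Longrightarrow> r \<le> s \<Longrightarrow> s \<le> t \<Longrightarrow> t \<le> T \<Longrightarrow> g \<in> Gamma_bar
                      \<Longrightarrow> S r t g = S s t (S r s g)"
    and linear: "\<And>\<rho> s t. snd \<rho> \<in> {-1..0} \<Longrightarrow> 0 \<le> s \<Longrightarrow> s \<le> t \<Longrightarrow> t \<le> T
                   \<Longrightarrow> S s t (lin_fun \<rho>) = (\<lambda>x. lin_fun \<rho> x + vel \<rho> * (t - s))"
begin

lemma S_eq_if_eq_on_sup_ball:
  assumes "g \<in> Gamma_bar" "h \<in> Gamma_bar" "0 \<le> s" "s \<le> t" "t \<le> T"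
    and "\<forall>z\<in>sup_ball x (\<alpha> * (t - s)). g z = h z"
  shows "S s t g x = S s t h x"
proof -
  have "ereal \<bar>S s t g x - S s t h x\<bar> \<le> (SUP z\<in>sup_ball x 0. ereal \<bar>S s t g z - S s t h z\<bar>)"
    by (rule SUP_upper) (simp add: sup_ball_def)
  also have "\<dots> \<le> (SUP z\<in>sup_ball x (0 + \<alpha> * (t - s)). ereal \<bar>g z - h z\<bar>)"
    using assms by (intro locality) auto
  also have "\<dots> \<le> 0"
    using assms(6) by (intro SUP_least) simp
  finally show ?thesis by simp
qed

lemma S_le_linear_solution:
  assumes g: "g \<in> Gamma_bar" and st: "0 \<le> s" "s \<le> t" "t \<le> T" and \<rho>: "snd \<rho> \<in> {-1..0}"
    and below: "\<forall>x\<in>sup_ball x0 (\<alpha> * (t - s)). g x \<le> c + lin_fun \<rho> (x - x0)"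
  shows "S s t g x0 \<le> c + vel \<rho> * (t - s)"
proof -
  define l where "l = (\<lambda>x. lin_fun \<rho> x + (c - lin_fun \<rho> x0))"
  have l: "l \<in> Gamma_bar"
    unfolding l_def using \<rho> by (rule lin_fun_plus_const_in_Gamma_bar)
  have gl: "(\<lambda>x. min (g x) (l x)) \<in> Gamma_bar"
    using g l by (rule min_in_Gamma_bar)
  have "S s t g x0 = S s t (\<lambda>x. min (g x) (l x)) x0"
    using below by (intro S_eq_if_eq_on_sup_ball[OF g gl st]) (auto simp: l_def lin_fun_diff min_def)
  also have "\<dots> \<le> S s t l x0"
    by (rule mono[OF st gl l, rule_format]) simp
  also have "S s t l x0 = c + vel \<rho> * (t - s)"
    using transl[OF st, of "lin_fun \<rho>"] lin_fun_plus_const_in_Gamma_bar[OF \<rho>, of 0] linear[OF \<rho> st]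
    by (simp add: l_def)
  finally show ?thesis .
qed

lemma S_ge_linear_solution:
  assumes g: "g \<in> Gamma_bar" and st: "0 \<le> s" "s \<le> t" "t \<le> T" and \<rho>: "snd \<rho> \<in> {-1..0}"
    and above: "\<forall>x\<in>sup_ball x0 (\<alpha> * (t - s)). c + lin_fun \<rho> (x - x0) \<le> g x"
  shows "c + vel \<rho> * (t - s) \<le> S s t g x0"
proof -
  define l where "l = (\<lambda>x. lin_fun \<rho> x + (c - lin_fun \<rho> x0))"
  have l: "l \<in> Gamma_bar"
    unfolding l_def using \<rho> by (rule lin_fun_plus_const_in_Gamma_bar)
  have gl: "(\<lambda>x. max (g x) (l x)) \<in> Gamma_bar"
    using g l by (rule max_in_Gamma_bar)
  have "c + vel \<rho> * (t - s) = S s t l x0"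
    using transl[OF st, of "lin_fun \<rho>"] lin_fun_plus_const_in_Gamma_bar[OF \<rho>, of 0] linear[OF \<rho> st]
    by (simp add: l_def)
  also have "\<dots> \<le> S s t (\<lambda>x. max (g x) (l x)) x0"
    by (rule mono[OF st l gl, rule_format]) simp
  also have "\<dots> = S s t g x0"
    using above by (intro S_eq_if_eq_on_sup_ball[OF gl g st]) (auto simp: l_def lin_fun_diff max_def)
  finally show ?thesis .
qed

section \<open>Viscosity inequalities\<close>

lemma touching_above_backward_diff:
  assumes f: "f \<in> Gamma_bar" and t0: "t0 \<in> {0<..<T}"
    and touch: "\<phi> (x0, t0) = S 0 t0 f x0"
    and above: "\<forall>\<^sub>F (x, t) in nhds (x0, t0). t \<in> {0<..<T} \<longrightarrow> S 0 t f x \<le> \<phi> (x, t)"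
    and slope: "snd p \<in> {-1..0}"
    and expansion: "\<And>\<epsilon>. \<epsilon> > 0 \<Longrightarrow> \<forall>\<^sub>F (x, t) in nhds (x0, t0).
                      \<bar>\<phi> (x, t) - \<phi> (x0, t) - lin_fun p (x - x0)\<bar> \<le> \<epsilon> * dist x x0"
    and eps: "\<epsilon> > 0"
  shows "\<forall>\<^sub>F h in at_right 0. \<phi> (x0, t0) - \<phi> (x0, t0 - h) \<le> (vel p + \<epsilon>) * h"
proof -
  have \<eta>: "\<epsilon> / (2 * \<alpha>) > 0" using eps alpha_pos by simp
  have "\<forall>\<^sub>F (x, t) in nhds (x0, t0). t \<in> {0<..<T} \<and> S 0 t f x \<le> \<phi> (x, t)
          \<and> \<bar>\<phi> (x, t) - \<phi> (x0, t) - lin_fun p (x - x0)\<bar> \<le> \<epsilon> / (2 * \<alpha>) * dist x x0"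
    using eventually_nhds_time_slab[OF t0] above expansion[OF \<eta>] by eventually_elim auto
  from eventually_backward_cone[OF this, of \<alpha>]
  show ?thesis
    using eventually_at_right_less
  proof eventually_elim
    case (elim h)
    then have s: "0 \<le> t0 - h" "t0 - h \<le> t0" "t0 \<le> T"
      using center_in_sup_ball[of "\<alpha> * h" x0] alpha_pos t0 by auto
    have "S 0 (t0 - h) f x \<le> (\<phi> (x0, t0 - h) + \<epsilon> * h) + lin_fun p (x - x0)"
      if x: "x \<in> sup_ball x0 (\<alpha> * (t0 - (t0 - h)))" for x
    proof -
      have "S 0 (t0 - h) f x \<le> \<phi> (x, t0 - h)"
        and "\<phi> (x, t0 - h) - \<phi> (x0, t0 - h) - lin_fun p (x - x0) \<le> \<epsilon> / (2 * \<alpha>) * dist x x0"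
        using elim x by (auto dest: abs_le_D1)
      moreover have "\<epsilon> / (2 * \<alpha>) * dist x x0 \<le> \<epsilon> * h"
        using x alpha_pos eps by (intro scaled_dist_le_of_sup_ball) auto
      ultimately show ?thesis by linarith
    qed
    then have "S (t0 - h) t0 (S 0 (t0 - h) f) x0 \<le> (\<phi> (x0, t0 - h) + \<epsilon> * h) + vel p * (t0 - (t0 - h))"
      using maps_into[OF _ _ _ f] s by (intro S_le_linear_solution slope) auto
    then show ?case
      using semigroup[OF _ s f] touch by (simp add: algebra_simps)
  qed
qed

lemma subsolution_ineq:
  assumes f: "f \<in> Gamma_bar" and t0: "t0 \<in> {0<..<T}"
    and touch: "\<phi> (x0, t0) = S 0 t0 f x0"
    and above: "\<forall>\<^sub>F (x, t) in nhds (x0, t0). t \<in> {0<..<T} \<longrightarrow> S 0 t f x \<le> \<phi> (x, t)"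
    and dt: "((\<lambda>t. \<phi> (x0, t)) has_real_derivative \<phi>t) (at t0)"
    and d2: "((\<lambda>b. \<phi> ((fst x0, b), t0)) has_real_derivative snd p) (at (snd x0))"
    and expansion: "\<And>\<epsilon>. \<epsilon> > 0 \<Longrightarrow> \<forall>\<^sub>F (x, t) in nhds (x0, t0).
                      \<bar>\<phi> (x, t) - \<phi> (x0, t) - lin_fun p (x - x0)\<bar> \<le> \<epsilon> * dist x x0"
  shows "\<phi>t \<le> vel p"
proof -
  have slope: "snd p \<in> {-1..0}"
  proof (rule Gamma_bar_touching_above_slope[OF _ d2])
    show "S 0 t0 f \<in> Gamma_bar" using maps_into f t0 by auto
    show "\<phi> ((fst x0, snd x0), t0) = S 0 t0 f (fst x0, snd x0)" using touch by simp
    show "\<forall>\<^sub>F b in nhds (snd x0). S 0 t0 f (fst x0, b) \<le> \<phi> ((fst x0, b), t0)"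
      using eventually_nhds_slice[OF above] t0 by simp
  qed
  have "\<phi>t \<le> vel p + \<epsilon>" if "\<epsilon> > 0" for \<epsilon>
    using dt touching_above_backward_diff[OF f t0 touch above slope expansion that]
    by (rule DERIV_le_of_left_diff)
  then show ?thesis by (rule field_le_epsilon)
qed

lemma touching_below_backward_diff:
  assumes f: "f \<in> Gamma_bar" and t0: "t0 \<in> {0<..<T}"
    and touch: "\<phi> (x0, t0) = S 0 t0 f x0"
    and below: "\<forall>\<^sub>F (x, t) in nhds (x0, t0). t \<in> {0<..<T} \<longrightarrow> \<phi> (x, t) \<le> S 0 t f x"
    and slope: "snd p \<in> {-1..0}"
    and expansion: "\<And>\<epsilon>. \<epsilon> > 0 \<Longrightarrow> \<forall>\<^sub>F (x, t) in nhds (x0, t0).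
                      \<bar>\<phi> (x, t) - \<phi> (x0, t) - lin_fun p (x - x0)\<bar> \<le> \<epsilon> * dist x x0"
    and eps: "\<epsilon> > 0"
  shows "\<forall>\<^sub>F h in at_right 0. (vel p - \<epsilon>) * h \<le> \<phi> (x0, t0) - \<phi> (x0, t0 - h)"
proof -
  have \<eta>: "\<epsilon> / (2 * \<alpha>) > 0" using eps alpha_pos by simp
  have "\<forall>\<^sub>F (x, t) in nhds (x0, t0). t \<in> {0<..<T} \<and> \<phi> (x, t) \<le> S 0 t f x
          \<and> \<bar>\<phi> (x, t) - \<phi> (x0, t) - lin_fun p (x - x0)\<bar> \<le> \<epsilon> / (2 * \<alpha>) * dist x x0"
    using eventually_nhds_time_slab[OF t0] below expansion[OF \<eta>] by eventually_elim auto
  from eventually_backward_cone[OF this, of \<alpha>]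
  show ?thesis
    using eventually_at_right_less
  proof eventually_elim
    case (elim h)
    then have s: "0 \<le> t0 - h" "t0 - h \<le> t0" "t0 \<le> T"
      using center_in_sup_ball[of "\<alpha> * h" x0] alpha_pos t0 by auto
    have "(\<phi> (x0, t0 - h) - \<epsilon> * h) + lin_fun p (x - x0) \<le> S 0 (t0 - h) f x"
      if x: "x \<in> sup_ball x0 (\<alpha> * (t0 - (t0 - h)))" for x
    proof -
      have "\<phi> (x, t0 - h) \<le> S 0 (t0 - h) f x"
        and "- (\<epsilon> / (2 * \<alpha>) * dist x x0) \<le> \<phi> (x, t0 - h) - \<phi> (x0, t0 - h) - lin_fun p (x - x0)"
        using elim x by (auto dest: abs_le_D2)
      moreover have "\<epsilon> / (2 * \<alpha>) * dist x x0 \<le> \<epsilon> * h"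
        using x alpha_pos eps by (intro scaled_dist_le_of_sup_ball) auto
      ultimately show ?thesis by linarith
    qed
    then have "(\<phi> (x0, t0 - h) - \<epsilon> * h) + vel p * (t0 - (t0 - h)) \<le> S (t0 - h) t0 (S 0 (t0 - h) f) x0"
      using maps_into[OF _ _ _ f] s by (intro S_ge_linear_solution slope) auto
    then show ?case
      using semigroup[OF _ s f] touch by (simp add: algebra_simps)
  qed
qed

lemma supersolution_ineq:
  assumes f: "f \<in> Gamma_bar" and t0: "t0 \<in> {0<..<T}"
    and touch: "\<phi> (x0, t0) = S 0 t0 f x0"
    and below: "\<forall>\<^sub>F (x, t) in nhds (x0, t0). t \<in> {0<..<T} \<longrightarrow> \<phi> (x, t) \<le> S 0 t f x"
    and dt: "((\<lambda>t. \<phi> (x0, t)) has_real_derivative \<phi>t) (at t0)"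
    and d2: "((\<lambda>b. \<phi> ((fst x0, b), t0)) has_real_derivative snd p) (at (snd x0))"
    and expansion: "\<And>\<epsilon>. \<epsilon> > 0 \<Longrightarrow> \<forall>\<^sub>F (x, t) in nhds (x0, t0).
                      \<bar>\<phi> (x, t) - \<phi> (x0, t) - lin_fun p (x - x0)\<bar> \<le> \<epsilon> * dist x x0"
  shows "vel p \<le> \<phi>t"
proof -
  have slope: "snd p \<in> {-1..0}"
  proof (rule Gamma_bar_touching_below_slope[OF _ d2])
    show "S 0 t0 f \<in> Gamma_bar" using maps_into f t0 by auto
    show "\<phi> ((fst x0, snd x0), t0) = S 0 t0 f (fst x0, snd x0)" using touch by simp
    show "\<forall>\<^sub>F b in nhds (snd x0). \<phi> ((fst x0, b), t0) \<le> S 0 t0 f (fst x0, b)"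
      using eventually_nhds_slice[OF below] t0 by simp
  qed
  have "vel p - \<epsilon> \<le> \<phi>t" if "\<epsilon> > 0" for \<epsilon>
    using dt touching_below_backward_diff[OF f t0 touch below slope expansion that]
    by (rule DERIV_ge_of_left_diff)
  then show ?thesis by (meson diff_le_eq field_le_epsilon)
qed

lemma viscosity_solution_evolution:
  assumes f: "f \<in> Gamma_bar" and initial: "\<And>x. S 0 0 f x = f x"
    and cont: "continuous_on (UNIV \<times> {0..T}) (\<lambda>(x, t). S 0 t f x)"
  shows "viscosity_solution T f (\<lambda>x t. S 0 t f x)"
  unfolding viscosity_solution_def Let_def spatial_grad_def[symmetric]
proof (intro conjI allI impI initial cont)
  fix \<phi> x0 t0
  assume test: "smooth_on (UNIV \<times> {0<..<T}) \<phi> \<and> t0 \<in> {0<..<T} \<and> \<phi> (x0, t0) = S 0 t0 f x0"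
  have "open (UNIV \<times> {0<..<T} :: ((real \<times> real) \<times> real) set)"
    by (simp add: open_Times)
  note first_order = smooth_on_first_order[OF _ this, of \<phi> x0 t0]
  {
    assume "\<exists>N. open N \<and> (x0, t0) \<in> N \<and> (\<forall>x t. (x, t) \<in> N \<and> t \<in> {0<..<T} \<longrightarrow> S 0 t f x \<le> \<phi> (x, t))"
    then have "\<forall>\<^sub>F (x, t) in nhds (x0, t0). t \<in> {0<..<T} \<longrightarrow> S 0 t f x \<le> \<phi> (x, t)"
      by (auto simp: eventually_nhds)
    with test show "deriv (\<lambda>t. \<phi> (x0, t)) t0 \<le> vel (spatial_grad \<phi> x0 t0)"
      using first_order by (intro subsolution_ineq[OF f]) auto
  }
  {
    assume "\<exists>N. open N \<and> (x0, t0) \<in> N \<and> (\<forall>x t. (x, t) \<in> N \<and> t \<in> {0<..<T} \<longrightarrow> \<phi> (x, t) \<le> S 0 t f x)"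
    then have "\<forall>\<^sub>F (x, t) in nhds (x0, t0). t \<in> {0<..<T} \<longrightarrow> \<phi> (x, t) \<le> S 0 t f x"
      by (auto simp: eventually_nhds)
    with test show "vel (spatial_grad \<phi> x0 t0) \<le> deriv (\<lambda>t. \<phi> (x0, t)) t0"
      using first_order by (intro supersolution_ineq[OF f]) auto
  }
qed

end

theorem proposition3p5:
  fixes T :: real
    and S :: "real \<Rightarrow> real \<Rightarrow> ((real \<times> real) \<Rightarrow> real) \<Rightarrow> ((real \<times> real) \<Rightarrow> real)"
    and f :: "(real \<times> real) \<Rightarrow> real"
  assumes T_pos: "T > 0"
    and maps_into: "\<And>s t g. 0 \<le> s \<Longrightarrow> s \<le> t \<Longrightarrow> t \<le> T \<Longrightarrow> g \<in> Gamma_bar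
                      \<Longrightarrow> S s t g \<in> Gamma_bar"
    and transl: "\<And>s t g c. 0 \<le> s \<Longrightarrow> s \<le> t \<Longrightarrow> t \<le> T \<Longrightarrow> g \<in> Gamma_bar
                      \<Longrightarrow> S s t (\<lambda>x. g x + c) = (\<lambda>x. S s t g x + c)"
    and mono: "\<And>s t g h. 0 \<le> s \<Longrightarrow> s \<le> t \<Longrightarrow> t \<le> T \<Longrightarrow> g \<in> Gamma_bar \<Longrightarrow> h \<in> Gamma_bar
                      \<Longrightarrow> (\<forall>x. g x \<le> h x) \<Longrightarrow> (\<forall>x. S s t g x \<le> S s t h x)"
    and local: "\<exists>\<alpha>>1. \<forall>g h s t x R. g \<in> Gamma_bar \<and> h \<in> Gamma_bar \<and> 0 \<le> s \<and> s \<le> t \<and> t \<le> T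
                      \<and> R \<ge> 0 \<longrightarrow>
                 (SUP z\<in>sup_ball x R. ereal \<bar>S s t g z - S s t h z\<bar>)
                   \<le> (SUP z\<in>sup_ball x (R + \<alpha> * (t - s)). ereal \<bar>g z - h z\<bar>)"
    and semigroup: "\<And>r s t g. 0 \<le> r \<Longrightarrow> r \<le> s \<Longrightarrow> s \<le> t \<Longrightarrow> t \<le> T \<Longrightarrow> g \<in> Gamma_bar
                      \<Longrightarrow> S r t g = S s t (S r s g)"
    and semigroup_id: "\<And>t g. 0 \<le> t \<Longrightarrow> t \<le> T \<Longrightarrow> g \<in> Gamma_bar \<Longrightarrow> S t t g = g"
    and linear: "\<And>\<rho> s t. snd \<rho> \<in> {-1..0} \<Longrightarrow> 0 \<le> s \<Longrightarrow> s \<le> t \<Longrightarrow> t \<le> T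
                      \<Longrightarrow> S s t (lin_fun \<rho>) = (\<lambda>x. lin_fun \<rho> x + vel \<rho> * (t - s))"
    and f_in: "f \<in> Gamma_bar"
    and cont: "continuous_on (UNIV \<times> {0..T}) (\<lambda>(x, t). S 0 t f x)"
  shows "viscosity_solution T f (\<lambda>x t. S 0 t f x)"
proof -
  from local obtain \<alpha> where "\<alpha> > 1"
    and loc: "\<forall>g h s t x R. g \<in> Gamma_bar \<and> h \<in> Gamma_bar \<and> 0 \<le> s \<and> s \<le> t \<and> t \<le> T \<and> R \<ge> 0
      \<longrightarrow> (SUP z\<in>sup_ball x R. ereal \<bar>S s t g z - S s t h z\<bar>)
        \<le> (SUP z\<in>sup_ball x (R + \<alpha> * (t - s)). ereal \<bar>g z - h z\<bar>)"
    by blast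
  interpret monotone_semigroup T S \<alpha>
    by (unfold_locales; (rule maps_into transl mono semigroup linear; assumption)?)
      (use \<open>\<alpha> > 1\<close> loc in auto)
  show ?thesis
    using semigroup_id T_pos f_in cont by (intro viscosity_solution_evolution) auto
qed

end
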